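(* Let $0<\mu<\lambda_{\min}(A)$ and $\ell\ge1$, and assume that $R_0,\dots,R_{\ell-1}$ (from BCG) have full column rank ($R_\ell$ may be rank deficient, e.g. zero). Define recursively $\Upsilon^{(\mu)}_0=\mu^{-1}I_m$, $\Theta^{(\mu)}_j=(R_j^TR_j)\Upsilon^{(\mu)}_j$, and for $j=1,\dots,\ell$ $$\Upsilon^{(\mu)}_j=\big[\mu(\Theta^{(\mu)}_{j-1}-\Theta_{j-1})+R_j^TR_j\big]^{-1}(\Theta^{(\mu)}_{j-1}-\Theta_{j-1}).$$ Then these quantities are well defined, and for every $k=1,\dots,\ell$, $$\Theta^{(\mu)}_{k-1}-\mathfrak{E}_{k-1}=\sum_{j=k}^{\ell}B^{(\mu)}_j+\big(\Theta^{(\mu)}_\ell-\mathfrak{E}_\ell\big),\qquad B^{(\mu)}_j=(\Theta^{(\mu)}_{j-1}-\Theta_{j-1})-\Theta^{(\mu)}_j,$$ where each $B^{(\mu)}_j$, $j=1,\dots,\ell$, is symmetric positive definite. If moreover $R_\ell=0$, then $\Theta^{(\mu)}_{k-1}-\mathfrak{E}_{k-1}$ is symmetric positive definite for every $k=1,\dots,\ell$.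
   Context: Let $A\in\mathbb{R}^{n\times n}$ be symmetric positive definite, let $B,X_0\in\mathbb{R}^{n\times m}$, and let $X=A^{-1}B$. The block conjugate gradient (BCG) algorithm sets $R_0=B-AX_0$, $P_0=R_0$, and for $k=1,2,\dots$: $\Upsilon_{k-1}=(P_{k-1}^TAP_{k-1})^{-1}(R_{k-1}^TR_{k-1})$, $X_k=X_{k-1}+P_{k-1}\Upsilon_{k-1}$, $R_k=R_{k-1}-AP_{k-1}\Upsilon_{k-1}$, $\Xi_k=(R_{k-1}^TR_{k-1})^{-1}(R_k^TR_k)$, $P_k=R_k+P_{k-1}\Xi_k$. Define $\mathfrak{E}_k=(X-X_k)^TA(X-X_k)$ and $\Theta_k=(R_k^TR_k)\Upsilon_k$. $\lambda_{\min}(A)$ denotes the smallest eigenvalue of $A$. *)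

theory Defs
  imports "HOL-Analysis.Analysis"
begin

definition spd :: "real^'k^'k \<Rightarrow> bool" where
  "spd M \<longleftrightarrow> transpose M = M \<and> (\<forall>x. x \<noteq> 0 \<longrightarrow> x \<bullet> (M *v x) > 0)"

definition lambda_min :: "real^'k^'k \<Rightarrow> real" where
  "lambda_min M = Min {l. \<exists>v. v \<noteq> 0 \<and> M *v v = l *\<^sub>R v}"

fun bcg :: "real^'n^'n \<Rightarrow> real^'m^'n \<Rightarrow> real^'m^'n \<Rightarrow> nat
            \<Rightarrow> (real^'m^'n) \<times> (real^'m^'n) \<times> (real^'m^'n)" where
  "bcg A B X0 0 = (X0, B - A ** X0, B - A ** X0)"
| "bcg A B X0 (Suc k) =
     (let (X, R, P) = bcg A B X0 k;
          Ups = matrix_inv (transpose P ** A ** P) ** (transpose R ** R);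
          X' = X + P ** Ups;
          R' = R - (A ** P) ** Ups;
          Xi = matrix_inv (transpose R ** R) ** (transpose R' ** R');
          P' = R' + P ** Xi
      in (X', R', P'))"

definition bcgX where "bcgX A B X0 k = fst (bcg A B X0 k)"
definition bcgR where "bcgR A B X0 k = fst (snd (bcg A B X0 k))"
definition bcgP where "bcgP A B X0 k = snd (snd (bcg A B X0 k))"

definition bcgUps :: "real^'n^'n \<Rightarrow> real^'m^'n \<Rightarrow> real^'m^'n \<Rightarrow> nat \<Rightarrow> real^'m^'m" where
  "bcgUps A B X0 k = matrix_inv (transpose (bcgP A B X0 k) ** A ** bcgP A B X0 k)
                      ** (transpose (bcgR A B X0 k) ** bcgR A B X0 k)"

definition bcgTheta :: "real^'n^'n \<Rightarrow> real^'m^'n \<Rightarrow> real^'m^'n \<Rightarrow> nat \<Rightarrow> real^'m^'m" where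
  "bcgTheta A B X0 k = (transpose (bcgR A B X0 k) ** bcgR A B X0 k) ** bcgUps A B X0 k"

definition bcgErr :: "real^'n^'n \<Rightarrow> real^'m^'n \<Rightarrow> real^'m^'n \<Rightarrow> nat \<Rightarrow> real^'m^'m" where
  "bcgErr A B X0 k = transpose (matrix_inv A ** B - bcgX A B X0 k) ** A
                       ** (matrix_inv A ** B - bcgX A B X0 k)"

fun UpsMu :: "real \<Rightarrow> real^'n^'n \<Rightarrow> real^'m^'n \<Rightarrow> real^'m^'n \<Rightarrow> nat \<Rightarrow> real^'m^'m" where
  "UpsMu mu A B X0 0 = (inverse mu) *\<^sub>R mat 1"
| "UpsMu mu A B X0 (Suc j) =
     (let D = (transpose (bcgR A B X0 j) ** bcgR A B X0 j) ** UpsMu mu A B X0 j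
              - bcgTheta A B X0 j
      in matrix_inv (mu *\<^sub>R D + transpose (bcgR A B X0 (Suc j)) ** bcgR A B X0 (Suc j)) ** D)"

definition ThetaMu :: "real \<Rightarrow> real^'n^'n \<Rightarrow> real^'m^'n \<Rightarrow> real^'m^'n \<Rightarrow> nat \<Rightarrow> real^'m^'m" where
  "ThetaMu mu A B X0 j = (transpose (bcgR A B X0 j) ** bcgR A B X0 j) ** UpsMu mu A B X0 j"

text \<open>B^(\<mu>)_j = (\<Theta>^(\<mu>)_{j-1} - \<Theta>_{j-1}) - \<Theta>^(\<mu>)_j (used for j \<ge> 1).\<close>
definition BMu :: "real \<Rightarrow> real^'n^'n \<Rightarrow> real^'m^'n \<Rightarrow> real^'m^'n \<Rightarrow> nat \<Rightarrow> real^'m^'m" where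
  "BMu mu A B X0 j = (ThetaMu mu A B X0 (j - 1) - bcgTheta A B X0 (j - 1)) - ThetaMu mu A B X0 j"

end

(* With G_j = R_j^T R_j and M_j = P_j^T A P_j one has Theta_j = G_j M_j^-1 G_j, and the BCG
   error satisfies E_j = Theta_j + E_(j+1); this gives the telescoping identity.

   For positivity, C = A - mu I is positive definite because mu < lambda_min(A). Conjugating
   the residuals with respect to C yields blocks Z_j with N_j = Z_j^T C Z_j positive definite,
   and induction on j shows Theta^(mu)_j = G_j (M_j - N_j)^-1 G_j with M_j - N_j positive
   definite. Since M_j = (M_j - N_j) + N_j, the gap D_j = Theta^(mu)_j - Theta_j =
   G_j ((M_j - N_j)^-1 - M_j^-1) G_j is positive definite, and then so is
   B^(mu)_(j+1) = mu D_j (mu D_j + G_(j+1))^-1 D_j. *)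

theory Submission
  imports Defs
begin

section \<open>Matrix algebra\<close>

lemma matrix_add_rdistrib: "((A::'a::semiring_1^'n^'m) + B) ** C = A ** C + B ** C"
  by (vector matrix_matrix_mult_def sum.distrib[symmetric] field_simps)

lemma matrix_diff_ldistrib: "(A::'a::ring_1^'n^'m) ** (B - C) = A ** B - A ** C"
  by (vector matrix_matrix_mult_def sum_subtractf[symmetric] field_simps)

lemma matrix_diff_rdistrib: "((A::'a::ring_1^'n^'m) - B) ** C = A ** C - B ** C"
  by (vector matrix_matrix_mult_def sum_subtractf[symmetric] field_simps)

lemma matrix_mul_uminus_left: "(- (A::'a::ring_1^'n^'m)) ** B = - (A ** B)"
  by (vector matrix_matrix_mult_def sum_negf[symmetric])

lemma matrix_mul_uminus_right: "(A::'a::ring_1^'n^'m) ** (- B) = - (A ** B)"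
  by (vector matrix_matrix_mult_def sum_negf[symmetric])

lemma matrix_mul_scaleR_left: "(c *\<^sub>R (A::real^'n^'m)) ** B = c *\<^sub>R (A ** B)"
  by (simp add: scalar_matrix_assoc)

lemma matrix_mul_scaleR_right: "(A::real^'n^'m) ** (c *\<^sub>R B) = c *\<^sub>R (A ** B)"
  by (simp add: matrix_scalar_ac scalar_matrix_assoc)

lemma transpose_add: "transpose ((A::'a::semiring_1^'n^'m) + B) = transpose A + transpose B"
  by (simp add: transpose_def vec_eq_iff)

lemma transpose_diff: "transpose ((A::'a::ring_1^'n^'m) - B) = transpose A - transpose B"
  by (simp add: transpose_def vec_eq_iff)

lemma transpose_uminus: "transpose (- (A::'a::ring_1^'n^'m)) = - transpose A"
  by (simp add: transpose_def vec_eq_iff)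

lemma transpose_zero [simp]: "transpose (0::'a::semiring_1^'n^'m) = 0"
  by (simp add: transpose_def vec_eq_iff)

text \<open>Normal form: sums of right-nested products.\<close>
lemmas matrix_expand_simps = matrix_add_rdistrib matrix_add_ldistrib matrix_diff_ldistrib
  matrix_diff_rdistrib matrix_mul_uminus_left matrix_mul_uminus_right matrix_mul_scaleR_left
  matrix_mul_scaleR_right transpose_add transpose_diff transpose_uminus transpose_scalar
  matrix_transpose_mul matrix_mul_assoc[symmetric]

lemma matrix_inv_right: "invertible (A::'a::semiring_1^'n^'m) \<Longrightarrow> A ** matrix_inv A = mat 1"
  unfolding invertible_def matrix_inv_def by (rule someI2_ex) auto

lemma matrix_inv_left: "invertible (A::'a::semiring_1^'n^'m) \<Longrightarrow> matrix_inv A ** A = mat 1"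
  unfolding invertible_def matrix_inv_def by (rule someI2_ex) auto

lemma matrix_mul_inv_cancel: "invertible (A::'a::semiring_1^'n^'m) \<Longrightarrow> A ** (matrix_inv A ** B) = B"
  by (simp add: matrix_mul_assoc matrix_inv_right)

lemma matrix_inv_mul_cancel: "invertible (A::'a::semiring_1^'n^'m) \<Longrightarrow> matrix_inv A ** (A ** B) = B"
  by (simp add: matrix_mul_assoc matrix_inv_left)

lemma matrix_inv_unique:
  assumes "(A::real^'n^'n) ** B = mat 1"
  shows "matrix_inv A = B"
proof -
  have "invertible A"
    using assms matrix_left_right_inverse invertible_def by blast
  then have "matrix_inv A ** (A ** B) = B"
    by (rule matrix_inv_mul_cancel)
  then show ?thesis
    by (simp add: assms)
qed

lemma invertible_right_inverseI: "(A::real^'n^'n) ** B = mat 1 \<Longrightarrow> invertible A"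
  using matrix_left_right_inverse invertible_def by blast

lemma matrix_inv_inv: "invertible (A::real^'n^'n) \<Longrightarrow> matrix_inv (matrix_inv A) = A"
  by (rule matrix_inv_unique) (rule matrix_inv_left)

lemma matrix_inv_transpose:
  "invertible (A::real^'n^'n) \<Longrightarrow> matrix_inv (transpose A) = transpose (matrix_inv A)"
  by (rule matrix_inv_unique) (metis matrix_inv_left matrix_transpose_mul transpose_mat)

lemma matrix_inv_scaleR:
  "invertible (A::real^'n^'n) \<Longrightarrow> c \<noteq> 0 \<Longrightarrow> matrix_inv (c *\<^sub>R A) = inverse c *\<^sub>R matrix_inv A"
  by (rule matrix_inv_unique) (simp add: matrix_mul_scaleR_left matrix_mul_scaleR_right matrix_inv_right)

section \<open>Positive definite matrices\<close>

definition psd :: "real^'k^'k \<Rightarrow> bool" where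
  "psd M \<longleftrightarrow> transpose M = M \<and> (\<forall>x. x \<bullet> (M *v x) \<ge> 0)"

lemma inner_matrix_vector_transpose: "(x::real^'n) \<bullet> (y v* Q) = (Q *v x) \<bullet> y"
  by (metis dot_lmul_matrix inner_commute)

lemma inner_symmetric_matrix:
  "transpose A = A \<Longrightarrow> (x::real^'n) \<bullet> (A *v y) = (A *v x) \<bullet> y"
  by (metis inner_matrix_vector_transpose transpose_matrix_vector)

lemma spd_symmetric: "spd M \<Longrightarrow> transpose M = M"
  by (simp add: spd_def)

lemma spd_kernel: "spd M \<Longrightarrow> M *v x = 0 \<Longrightarrow> x = 0"
  unfolding spd_def by (metis inner_zero_right less_irrefl)

lemma spd_imp_psd: "spd M \<Longrightarrow> psd M"
  unfolding spd_def psd_def by (metis inner_zero_left less_eq_real_def)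

lemma spd_invertible: "spd (M::real^'k^'k) \<Longrightarrow> invertible M"
  by (metis invertible_left_inverse matrix_left_invertible_ker spd_kernel)

lemma spd_matrix_inv:
  assumes "spd (M::real^'k^'k)"
  shows "spd (matrix_inv M)"
proof -
  have inv: "invertible M"
    using assms spd_invertible by blast
  have "x \<bullet> (matrix_inv M *v x) > 0" if "x \<noteq> 0" for x
  proof -
    define y where "y = matrix_inv M *v x"
    have x: "x = M *v y"
      by (simp add: y_def matrix_vector_mul_assoc matrix_inv_right inv)
    then have "y \<noteq> 0"
      using that by auto
    then have "y \<bullet> (M *v y) > 0"
      using assms spd_def by blast
    then show ?thesis
      by (simp add: x matrix_vector_mul_assoc matrix_inv_left inv inner_commute)
  qed
  then show ?thesis
    using matrix_inv_transpose[OF inv] spd_symmetric[OF assms] by (simp add: spd_def)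
qed

lemma spd_matrix_inv_symmetric: "spd M \<Longrightarrow> transpose (matrix_inv M) = matrix_inv M"
  using spd_matrix_inv spd_symmetric by blast

lemma spd_congruence:
  assumes "spd (S::real^'a^'a)" and "\<And>x. (Q::real^'b^'a) *v x = 0 \<Longrightarrow> x = 0"
  shows "spd (transpose Q ** S ** Q)"
  unfolding spd_def
proof (intro conjI allI impI)
  show "transpose (transpose Q ** S ** Q) = transpose Q ** S ** Q"
    using spd_symmetric[OF assms(1)] by (simp add: matrix_transpose_mul matrix_mul_assoc)
  fix x :: "real^'b"
  assume "x \<noteq> 0"
  then have "(Q *v x) \<bullet> (S *v (Q *v x)) > 0"
    using assms spd_def by blast
  then show "x \<bullet> ((transpose Q ** S ** Q) *v x) > 0"
    by (simp add: matrix_vector_mul_assoc[symmetric] inner_matrix_vector_transpose)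
qed

lemma psd_congruence:
  assumes "psd (S::real^'a^'a)"
  shows "psd (transpose (Q::real^'b^'a) ** S ** Q)"
  unfolding psd_def
proof (intro conjI allI)
  show "transpose (transpose Q ** S ** Q) = transpose Q ** S ** Q"
    using assms by (simp add: psd_def matrix_transpose_mul matrix_mul_assoc)
  fix x :: "real^'b"
  have "(Q *v x) \<bullet> (S *v (Q *v x)) \<ge> 0"
    using assms psd_def by blast
  then show "x \<bullet> ((transpose Q ** S ** Q) *v x) \<ge> 0"
    by (simp add: matrix_vector_mul_assoc[symmetric] inner_matrix_vector_transpose)
qed

lemma psd_gram: "psd (transpose (R::real^'b^'a) ** R)"
  using psd_congruence[of "mat 1" R] by (simp add: psd_def)

lemma spd_gram: "(\<And>x. (R::real^'b^'a) *v x = 0 \<Longrightarrow> x = 0) \<Longrightarrow> spd (transpose R ** R)"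
  using spd_congruence[of "mat 1" R] by (simp add: spd_def)

lemma spd_add_psd: "spd S \<Longrightarrow> psd T \<Longrightarrow> spd (S + T)"
  unfolding spd_def psd_def
  by (simp add: transpose_add matrix_vector_mult_add_rdistrib inner_add_right add_pos_nonneg)

lemma spd_add: "spd S \<Longrightarrow> spd T \<Longrightarrow> spd (S + T)"
  by (simp add: spd_add_psd spd_imp_psd)

lemma spd_scaleR: "spd S \<Longrightarrow> (c::real) > 0 \<Longrightarrow> spd (c *\<^sub>R S)"
  unfolding spd_def by (simp add: transpose_scalar scaleR_matrix_vector_assoc[symmetric])

lemma spd_add_congruence_inv:
  assumes "spd Y" and "spd N"
  shows "spd (Y + Y ** matrix_inv N ** Y)"
proof -
  have "psd (transpose Y ** matrix_inv N ** Y)"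
    by (rule psd_congruence[OF spd_imp_psd[OF spd_matrix_inv[OF assms(2)]]])
  then show ?thesis
    using spd_add_psd[OF assms(1)] spd_symmetric[OF assms(1)] by simp
qed

lemma matrix_inv_add_congruence_inv:
  fixes Y N :: "real^'m^'m"
  assumes Y: "spd Y" and N: "spd N"
  shows "matrix_inv (Y + Y ** matrix_inv N ** Y) = matrix_inv Y - matrix_inv (Y + N)"
proof -
  have iY: "invertible Y" and iN: "invertible N" and iYN: "invertible (Y + N)"
    using Y N spd_invertible spd_add by blast+
  have factor: "Y + Y ** matrix_inv N ** Y = (Y + N) ** (matrix_inv N ** Y)"
    by (simp add: matrix_expand_simps matrix_mul_inv_cancel iN)
  have "(matrix_inv Y - matrix_inv (Y + N)) ** (Y + Y ** matrix_inv N ** Y)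
      = matrix_inv Y ** (Y + Y ** matrix_inv N ** Y) - matrix_inv (Y + N) ** ((Y + N) ** (matrix_inv N ** Y))"
    by (simp add: matrix_diff_rdistrib factor)
  also have "\<dots> = mat 1"
    by (simp only: matrix_inv_mul_cancel[OF iYN])
      (simp add: matrix_expand_simps matrix_inv_mul_cancel matrix_inv_left iY)
  finally have inv: "(matrix_inv Y - matrix_inv (Y + N)) ** (Y + Y ** matrix_inv N ** Y) = mat 1" .
  then show ?thesis
    by (metis matrix_inv_inv matrix_inv_unique invertible_right_inverseI)
qed

section \<open>The smallest eigenvalue\<close>

lemma nonneg_quadratic_imp_linear_coeff_zero:
  fixes a c :: real
  assumes "\<And>t. 0 \<le> 2 * t * a + t\<^sup>2 * c"
  shows "a = 0"
proof (rule ccontr)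
  assume "a \<noteq> 0"
  define k where "k = \<bar>c\<bar> + 1"
  have k: "k \<ge> 1"
    by (simp add: k_def)
  define t where "t = - a / k"
  have "t\<^sup>2 * c \<le> a\<^sup>2 / k"
  proof -
    have "t\<^sup>2 * c \<le> t\<^sup>2 * k"
      by (rule mult_left_mono) (auto simp: k_def)
    also have "\<dots> = a\<^sup>2 / k"
      using k by (simp add: t_def power2_eq_square)
    finally show ?thesis .
  qed
  moreover have "2 * t * a = - 2 * a\<^sup>2 / k"
    by (simp add: t_def power2_eq_square)
  moreover have "a\<^sup>2 / k > 0"
    using \<open>a \<noteq> 0\<close> k by simp
  ultimately show False
    using assms[of t] by linarith
qed

text \<open>A positive semidefinite form vanishes at \<open>x\<close> only if \<open>x\<close> lies in the kernel:
  otherwise the form would be negative at \<open>x - t M x\<close> for small \<open>t > 0\<close>.\<close>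
lemma psd_quadratic_form_eq_0:
  assumes "psd M" and "x \<bullet> (M *v x) = 0"
  shows "M *v x = 0"
proof -
  have sym: "transpose M = M"
    using assms(1) psd_def by blast
  have "0 \<le> 2 * t * ((M *v x) \<bullet> (M *v x)) + t\<^sup>2 * ((M *v x) \<bullet> (M *v (M *v x)))" for t
  proof -
    have "0 \<le> (x + t *\<^sub>R (M *v x)) \<bullet> (M *v (x + t *\<^sub>R (M *v x)))"
      using assms(1) psd_def by blast
    also have "\<dots> = 2 * t * ((M *v x) \<bullet> (M *v x)) + t\<^sup>2 * ((M *v x) \<bullet> (M *v (M *v x)))"
      using assms(2) inner_symmetric_matrix[OF sym, of x "M *v x"]
      by (simp add: algebra_simps matrix_vector_mult_scaleR power2_eq_square inner_commute)
    finally show ?thesis .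
  qed
  then have "(M *v x) \<bullet> (M *v x) = 0"
    by (rule nonneg_quadratic_imp_linear_coeff_zero)
  then show ?thesis
    by simp
qed

lemma quadratic_form_attains_min_on_sphere:
  fixes A :: "real^'n^'n"
  obtains v where "v \<bullet> v = 1" "\<And>x. (v \<bullet> (A *v v)) * (x \<bullet> x) \<le> x \<bullet> (A *v x)"
proof -
  define f where "f v = v \<bullet> (A *v v)" for v :: "real^'n"
  have cont: "continuous_on (sphere 0 1) f"
    unfolding f_def
    by (intro continuous_intros continuous_on_compose2[OF _ continuous_on_id])
      (auto intro: linear_continuous_on bounded_linear_intros)
  have "sphere (0::real^'n) 1 \<noteq> {}"
    using norm_sgn[of "axis undefined 1 :: real^'n"] by (auto simp: axis_eq_0_iff)
  then obtain v where v: "v \<in> sphere 0 1" "\<And>y. y \<in> sphere 0 1 \<Longrightarrow> f v \<le> f y"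
    using continuous_attains_inf[OF compact_sphere _ cont] by blast
  have "f v * (x \<bullet> x) \<le> f x" for x
  proof (cases "x = 0")
    case False
    have "f v \<le> f (inverse (norm x) *\<^sub>R x)"
      using v False by simp
    also have "\<dots> = f x / (norm x)\<^sup>2"
      by (simp add: f_def matrix_vector_mult_scaleR power2_eq_square divide_inverse mult_ac)
    finally show ?thesis
      using False by (simp add: power2_norm_eq_inner[symmetric] pos_le_divide_eq)
  qed (simp add: f_def)
  moreover have "v \<bullet> v = 1"
    using v(1) by (simp add: norm_eq_1)
  ultimately show ?thesis
    using that unfolding f_def by blast
qed

text \<open>The minimum of the Rayleigh quotient is an eigenvalue.\<close>
lemma symmetric_matrix_min_eigenvalue:
  fixes A :: "real^'n^'n"
  assumes sym: "transpose A = A"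
  obtains v lam where "v \<noteq> 0" "A *v v = lam *\<^sub>R v" "\<And>x. lam * (x \<bullet> x) \<le> x \<bullet> (A *v x)"
proof -
  obtain v where v: "v \<bullet> v = 1" and lower: "\<And>x. (v \<bullet> (A *v v)) * (x \<bullet> x) \<le> x \<bullet> (A *v x)"
    using quadratic_form_attains_min_on_sphere by blast
  define lam where "lam = v \<bullet> (A *v v)"
  have psd: "psd (A - lam *\<^sub>R mat 1)"
    using lower sym unfolding lam_def
    by (simp add: psd_def transpose_diff transpose_scalar matrix_vector_mult_diff_rdistrib
        inner_diff_right scaleR_matrix_vector_assoc[symmetric])
  have "v \<bullet> ((A - lam *\<^sub>R mat 1) *v v) = 0"
    using v by (simp add: lam_def matrix_vector_mult_diff_rdistrib inner_diff_right
        scaleR_matrix_vector_assoc[symmetric])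
  then have "A *v v = lam *\<^sub>R v"
    using psd_quadratic_form_eq_0[OF psd]
    by (simp add: matrix_vector_mult_diff_rdistrib scaleR_matrix_vector_assoc[symmetric])
  moreover have "v \<noteq> 0"
    using v by auto
  ultimately show ?thesis
    using that lower unfolding lam_def by blast
qed

text \<open>Eigenvectors for distinct eigenvalues are orthogonal, hence linearly independent.\<close>
lemma symmetric_matrix_finite_eigenvalues:
  fixes A :: "real^'n^'n"
  assumes sym: "transpose A = A"
  shows "finite {l. \<exists>v. v \<noteq> 0 \<and> A *v v = l *\<^sub>R v}" (is "finite ?E")
proof -
  define ev where "ev l = (SOME v. v \<noteq> 0 \<and> A *v v = l *\<^sub>R v)" for l
  have ev: "ev l \<noteq> 0 \<and> A *v ev l = l *\<^sub>R ev l" if "l \<in> ?E" for l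
  proof -
    from that have "\<exists>v. v \<noteq> 0 \<and> A *v v = l *\<^sub>R v"
      by simp
    then show ?thesis
      unfolding ev_def by (rule someI_ex)
  qed
  have inj: "inj_on ev ?E"
  proof (rule inj_onI)
    fix a b
    assume a: "a \<in> ?E" and b: "b \<in> ?E" and eq: "ev a = ev b"
    then have "a *\<^sub>R ev a = b *\<^sub>R ev a"
      using ev[OF a] ev[OF b] by metis
    then show "a = b"
      using ev[OF a] by simp
  qed
  have "pairwise orthogonal (ev ` ?E)"
    unfolding pairwise_def
  proof (intro ballI impI)
    fix x y
    assume "x \<in> ev ` ?E" "y \<in> ev ` ?E" "x \<noteq> y"
    then obtain a b where a: "a \<in> ?E" "x = ev a" and b: "b \<in> ?E" "y = ev b" and "a \<noteq> b"
      by blast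
    have "b * (x \<bullet> y) = a * (x \<bullet> y)"
      using inner_symmetric_matrix[OF sym, of x y] ev[OF a(1)] ev[OF b(1)] a(2) b(2) by simp
    then show "orthogonal x y"
      using \<open>a \<noteq> b\<close> by (simp add: orthogonal_def)
  qed
  moreover have "0 \<notin> ev ` ?E"
    using ev by fastforce
  ultimately have "finite (ev ` ?E)"
    using pairwise_orthogonal_independent independent_imp_finite by blast
  then show ?thesis
    using finite_imageD inj by blast
qed

lemma spd_shift_below_lambda_min:
  fixes A :: "real^'n^'n"
  assumes sym: "transpose A = A" and mu: "mu < lambda_min A"
  shows "spd (A - mu *\<^sub>R mat 1)"
proof -
  obtain v lam where v: "v \<noteq> 0" "A *v v = lam *\<^sub>R v" and lower: "\<And>x. lam * (x \<bullet> x) \<le> x \<bullet> (A *v x)"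
    using symmetric_matrix_min_eigenvalue[OF sym] by blast
  have "lambda_min A \<le> lam"
    unfolding lambda_min_def using v symmetric_matrix_finite_eigenvalues[OF sym] by (auto intro: Min_le)
  have "x \<bullet> ((A - mu *\<^sub>R mat 1) *v x) > 0" if "x \<noteq> 0" for x
  proof -
    have "0 < (lam - mu) * (x \<bullet> x)"
      using \<open>lambda_min A \<le> lam\<close> mu that by simp
    also have "\<dots> \<le> x \<bullet> (A *v x) - mu * (x \<bullet> x)"
      using lower[of x] by (simp add: left_diff_distrib)
    also have "\<dots> = x \<bullet> ((A - mu *\<^sub>R mat 1) *v x)"
      by (simp add: matrix_vector_mult_diff_rdistrib inner_diff_right scaleR_matrix_vector_assoc[symmetric])
    finally show ?thesis .
  qed
  then show ?thesis
    using sym by (simp add: spd_def transpose_diff transpose_scalar)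
qed

section \<open>Block conjugate gradients\<close>

lemma bcg_0:
  "bcgX A B X0 0 = X0" "bcgR A B X0 0 = B - A ** X0" "bcgP A B X0 0 = B - A ** X0"
  by (simp_all add: bcgX_def bcgR_def bcgP_def)

lemma bcg_Suc:
  "bcgX A B X0 (Suc k) = bcgX A B X0 k + bcgP A B X0 k ** bcgUps A B X0 k"
  "bcgR A B X0 (Suc k) = bcgR A B X0 k - (A ** bcgP A B X0 k) ** bcgUps A B X0 k"
  "bcgP A B X0 (Suc k) = bcgR A B X0 (Suc k) + bcgP A B X0 k **
      (matrix_inv (transpose (bcgR A B X0 k) ** bcgR A B X0 k)
        ** (transpose (bcgR A B X0 (Suc k)) ** bcgR A B X0 (Suc k)))"
  by (cases "bcg A B X0 k"; simp add: bcgX_def bcgR_def bcgP_def bcgUps_def Let_def)+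

lemma bcgR_eq_residual: "bcgR A B X0 k = B - A ** bcgX A B X0 k"
  by (induction k) (simp_all add: bcg_0 bcg_Suc matrix_add_ldistrib matrix_mul_assoc)

locale bcg_full_rank =
  fixes A :: "real^'n^'n" and B X0 :: "real^'m^'n" and l :: nat
  assumes spd_A: "spd A"
    and residual_injective: "\<And>k x. k < l \<Longrightarrow> bcgR A B X0 k *v x = 0 \<Longrightarrow> x = 0"
begin

abbreviation R where "R k \<equiv> bcgR A B X0 k"
abbreviation P where "P k \<equiv> bcgP A B X0 k"

definition G where "G k = transpose (R k) ** R k"
definition M where "M k = transpose (P k) ** A ** P k"

lemma A_symmetric [simp]: "transpose A = A"
  using spd_A spd_symmetric by blast

lemma A_invertible: "invertible A"
  using spd_A spd_invertible by blast

lemma G_spd: "k < l \<Longrightarrow> spd (G k)"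
  unfolding G_def using residual_injective spd_gram by blast

lemma G_psd: "psd (G k)"
  unfolding G_def by (rule psd_gram)

lemma G_invertible: "k < l \<Longrightarrow> invertible (G k)"
  using G_spd spd_invertible by blast

lemma G_symmetric [simp]: "transpose (G k) = G k"
  by (simp add: G_def matrix_transpose_mul)

lemma G_inv_symmetric: "k < l \<Longrightarrow> transpose (matrix_inv (G k)) = matrix_inv (G k)"
  using G_spd spd_matrix_inv_symmetric by blast

lemma M_symmetric [simp]: "transpose (M k) = M k"
  by (simp add: M_def matrix_transpose_mul matrix_mul_assoc)

lemma R_R_mult: "transpose (R k) ** (R k ** X) = G k ** X"
  by (simp add: G_def matrix_mul_assoc)

lemma R_Suc: "R (Suc k) = R k - A ** (P k ** (matrix_inv (M k) ** G k))"
  by (simp add: bcg_Suc bcgUps_def G_def M_def matrix_mul_assoc)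

lemma P_Suc: "P (Suc k) = R (Suc k) + P k ** (matrix_inv (G k) ** G (Suc k))"
  by (simp add: bcg_Suc G_def)

lemma bcgTheta_eq: "bcgTheta A B X0 k = G k ** (matrix_inv (M k) ** G k)"
  by (simp add: bcgTheta_def bcgUps_def G_def M_def)

definition conjugate_upto where
  "conjugate_upto k \<longleftrightarrow> (\<forall>i<k. transpose (P i) ** R k = 0) \<and> (\<forall>i<k. transpose (R i) ** R k = 0)
     \<and> (\<forall>i<k. transpose (P i) ** A ** P k = 0) \<and> transpose (P k) ** R k = G k"

lemma M_spd_if_P_R_eq_G:
  assumes "k < l" and PR: "transpose (P k) ** R k = G k"
  shows "spd (M k)"
proof -
  have "x = 0" if "P k *v x = 0" for x
  proof -
    have "G k = transpose (R k) ** P k"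
      by (metis PR G_symmetric matrix_transpose_mul transpose_transpose)
    then have "G k *v x = 0"
      using that by (simp add: matrix_vector_mul_assoc[symmetric])
    then show "x = 0"
      using spd_kernel G_spd assms(1) by blast
  qed
  then show ?thesis
    unfolding M_def using spd_congruence[OF spd_A] by blast
qed

lemma A_P_eq_if_M_spd:
  assumes "k < l" "spd (M k)"
  shows "A ** P k = (R k - R (Suc k)) ** (matrix_inv (G k) ** M k)"
proof -
  have iM: "invertible (M k)" and iG: "invertible (G k)"
    using assms G_spd spd_invertible by blast+
  have "(R k - R (Suc k)) ** (matrix_inv (G k) ** M k)
      = A ** P k ** (matrix_inv (M k) ** (G k ** (matrix_inv (G k) ** M k)))"
    by (simp add: R_Suc matrix_mul_assoc)
  also have "\<dots> = A ** P k"
    by (simp add: matrix_mul_inv_cancel iG matrix_inv_left iM)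
  finally show ?thesis
    by simp
qed

context
  fixes k
  assumes k: "Suc k \<le> l" and conj: "\<forall>j\<le>k. conjugate_upto j"
begin

lemma M_spd_upto: "i \<le> k \<Longrightarrow> spd (M i)"
  using M_spd_if_P_R_eq_G conj k unfolding conjugate_upto_def by auto

lemma P_R_Suc_orthogonal: "i \<le> k \<Longrightarrow> transpose (P i) ** R (Suc k) = 0"
proof (cases "i = k")
  case True
  have "transpose (P k) ** R k = G k"
    using conj conjugate_upto_def by blast
  then have "transpose (P k) ** R (Suc k) = G k - M k ** (matrix_inv (M k) ** G k)"
    by (simp add: R_Suc matrix_expand_simps M_def)
  then show ?thesis
    using True spd_invertible[OF M_spd_upto[of k]] by (simp add: matrix_mul_inv_cancel)
next
  case False
  assume "i \<le> k"
  then have "i < k"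
    using False by simp
  then have "transpose (P i) ** R k = 0" "transpose (P i) ** A ** P k = 0"
    using conj unfolding conjugate_upto_def by auto
  then have "transpose (P i) ** (A ** (P k ** X)) = 0" for X
    by (metis matrix_mul_assoc times0_left)
  then show ?thesis
    using \<open>transpose (P i) ** R k = 0\<close> by (simp add: R_Suc matrix_expand_simps)
qed

lemma R_R_Suc_orthogonal: "i \<le> k \<Longrightarrow> transpose (R i) ** R (Suc k) = 0"
proof (cases i)
  case 0
  assume "i \<le> k"
  then show ?thesis
    using P_R_Suc_orthogonal[of 0] 0 by (simp add: bcg_0)
next
  case (Suc i')
  assume "i \<le> k"
  have "R i = P i - P i' ** (matrix_inv (G i') ** G i)"
    using P_Suc[of i'] Suc by simp
  then have "transpose (R i) ** R (Suc k) = transpose (P i) ** R (Suc k)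
      - transpose (matrix_inv (G i') ** G i) ** (transpose (P i') ** R (Suc k))"
    by (simp add: matrix_expand_simps)
  then show ?thesis
    using P_R_Suc_orthogonal[of i] P_R_Suc_orthogonal[of i'] \<open>i \<le> k\<close> Suc by simp
qed

lemma P_A_P_Suc_conjugate:
  assumes "i \<le> k"
  shows "transpose (P i) ** A ** P (Suc k) = 0"
proof -
  have A_P: "A ** P i = (R i - R (Suc i)) ** (matrix_inv (G i) ** M i)"
    using A_P_eq_if_M_spd M_spd_upto assms k by simp
  have P_A: "transpose (P i) ** (A ** X)
      = M i ** (matrix_inv (G i) ** (transpose (R i) ** X - transpose (R (Suc i)) ** X))" for X
  proof -
    have "transpose (P i) ** (A ** X) = transpose (A ** P i) ** X"
      by (simp add: matrix_transpose_mul matrix_mul_assoc)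
    then show ?thesis
      using G_inv_symmetric[of i] assms k
      by (simp add: A_P matrix_transpose_mul transpose_diff matrix_mul_assoc matrix_diff_ldistrib
          matrix_diff_rdistrib)
  qed
  have "transpose (P i) ** A ** P (Suc k) = transpose (P i) ** A ** R (Suc k)
      + transpose (P i) ** A ** P k ** (matrix_inv (G k) ** G (Suc k))"
    by (simp add: P_Suc matrix_add_ldistrib matrix_mul_assoc)
  also have "\<dots> = 0"
  proof (cases "i = k")
    case True
    then have "transpose (P k) ** A ** R (Suc k) = - (M k ** (matrix_inv (G k) ** G (Suc k)))"
      using P_A[of "R (Suc k)"] R_R_Suc_orthogonal[of k]
      by (simp add: matrix_mul_assoc G_def[of "Suc k", symmetric] matrix_mul_uminus_right)
    then show ?thesis
      using True by (simp add: M_def matrix_mul_assoc)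
  next
    case False
    then have "i < k"
      using assms by simp
    then have "transpose (P i) ** A ** R (Suc k) = 0"
      using R_R_Suc_orthogonal[of i] R_R_Suc_orthogonal[of "Suc i"] P_A[of "R (Suc k)"]
      by (simp add: matrix_mul_assoc)
    moreover have "transpose (P i) ** A ** P k = 0"
      using conj \<open>i < k\<close> unfolding conjugate_upto_def by auto
    ultimately show ?thesis
      by (simp add: matrix_mul_assoc)
  qed
  finally show ?thesis .
qed

lemma conjugate_upto_Suc: "conjugate_upto (Suc k)"
proof -
  have "transpose (P (Suc k)) ** R (Suc k) = G (Suc k)"
    using P_R_Suc_orthogonal[of k] by (simp add: P_Suc matrix_expand_simps G_def)
  then show ?thesis
    unfolding conjugate_upto_def
    using P_R_Suc_orthogonal R_R_Suc_orthogonal P_A_P_Suc_conjugate by (auto simp: less_Suc_eq_le)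
qed

end

lemma conjugate_upto_all: "k \<le> l \<Longrightarrow> conjugate_upto k"
proof -
  have "k \<le> l \<Longrightarrow> \<forall>j\<le>k. conjugate_upto j"
  proof (induction k)
    case 0
    then show ?case
      by (simp add: conjugate_upto_def bcg_0 G_def)
  next
    case (Suc k)
    then show ?case
      using conjugate_upto_Suc by (metis Suc_leD le_Suc_eq)
  qed
  then show "k \<le> l \<Longrightarrow> conjugate_upto k"
    by simp
qed

lemma R_orthogonal:
  assumes "i \<le> l" "j \<le> l" "i \<noteq> j"
  shows "transpose (R i) ** R j = 0"
proof (cases "i < j")
  case True
  then show ?thesis
    using conjugate_upto_all[OF assms(2)] conjugate_upto_def by blast
next
  case False
  then have "transpose (R j) ** R i = 0"
    using assms conjugate_upto_all[OF assms(1)] conjugate_upto_def by auto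
  then show ?thesis
    by (metis matrix_transpose_mul transpose_transpose transpose_zero)
qed

lemma R_orthogonal_mult: "i \<le> l \<Longrightarrow> j \<le> l \<Longrightarrow> i \<noteq> j \<Longrightarrow> transpose (R i) ** (R j ** X) = 0"
  by (simp add: matrix_mul_assoc R_orthogonal)

lemma P_R_eq_G: "k \<le> l \<Longrightarrow> transpose (P k) ** R k = G k"
  using conjugate_upto_all conjugate_upto_def by blast

lemma R_P_eq_G: "k \<le> l \<Longrightarrow> transpose (R k) ** P k = G k"
  using P_R_eq_G by (metis G_symmetric matrix_transpose_mul transpose_transpose)

lemma M_spd: "k < l \<Longrightarrow> spd (M k)"
  using M_spd_if_P_R_eq_G P_R_eq_G by simp

lemma M_invertible: "k < l \<Longrightarrow> invertible (M k)"
  using M_spd spd_invertible by blast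

lemma A_P_eq: "k < l \<Longrightarrow> A ** P k = (R k - R (Suc k)) ** (matrix_inv (G k) ** M k)"
  using A_P_eq_if_M_spd M_spd by blast

lemma M_inv_symmetric: "k < l \<Longrightarrow> transpose (matrix_inv (M k)) = matrix_inv (M k)"
  using M_spd spd_matrix_inv_symmetric by blast

lemma A_R_0_eq: "0 < l \<Longrightarrow> A ** R 0 = (R 0 - R (Suc 0)) ** (matrix_inv (G 0) ** M 0)"
  using A_P_eq[of 0] by (simp add: bcg_0)

lemma A_R_Suc_eq:
  assumes "Suc i < l"
  shows "A ** R (Suc i) = (R (Suc i) - R (Suc (Suc i))) ** (matrix_inv (G (Suc i)) ** M (Suc i))
    - (R i - R (Suc i)) ** (matrix_inv (G i) ** (M i ** (matrix_inv (G i) ** G (Suc i))))"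
proof -
  have "R (Suc i) = P (Suc i) - P i ** (matrix_inv (G i) ** G (Suc i))"
    using P_Suc[of i] by simp
  then have "A ** R (Suc i) = A ** P (Suc i) - A ** P i ** (matrix_inv (G i) ** G (Suc i))"
    by (simp add: matrix_diff_ldistrib matrix_mul_assoc)
  then show ?thesis
    using A_P_eq[OF assms] A_P_eq[of i] assms by (simp add: matrix_mul_assoc)
qed

text \<open>Since \<open>A R\<^sub>j\<close> lies in the span of \<open>R\<^sub>j\<^sub>-\<^sub>1, R\<^sub>j, R\<^sub>j\<^sub>+\<^sub>1\<close>, the block matrix
  \<open>(R\<^sub>i\<^sup>T A R\<^sub>j)\<close> is block tridiagonal.\<close>
lemma R_A_R_far:
  assumes "a < l" "b \<le> l" "a + 2 \<le> b"
  shows "transpose (R b) ** (A ** R a) = 0"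
proof (cases a)
  case 0
  then show ?thesis
    using assms A_R_0_eq by (simp add: matrix_expand_simps R_orthogonal_mult)
next
  case (Suc i)
  then show ?thesis
    using assms A_R_Suc_eq[of i] by (simp add: matrix_expand_simps R_orthogonal_mult)
qed

lemma R_A_R_far':
  assumes "a < l" "b \<le> l" "a + 2 \<le> b"
  shows "transpose (R a) ** (A ** R b) = 0"
  using arg_cong[OF R_A_R_far[OF assms], of transpose]
  by (simp add: matrix_transpose_mul matrix_mul_assoc)

lemma R_A_R_Suc:
  assumes "j < l"
  shows "transpose (R (Suc j)) ** (A ** R j) = - (G (Suc j) ** (matrix_inv (G j) ** M j))"
proof (cases j)
  case 0
  then show ?thesis
    using assms A_R_0_eq by (simp add: matrix_expand_simps R_orthogonal_mult R_R_mult)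
next
  case (Suc i)
  then show ?thesis
    using assms A_R_Suc_eq[of i] by (simp add: matrix_expand_simps R_orthogonal_mult R_R_mult)
qed

lemma R_A_R_Suc':
  assumes "j < l"
  shows "transpose (R j) ** (A ** R (Suc j)) = - (M j ** (matrix_inv (G j) ** G (Suc j)))"
  using arg_cong[OF R_A_R_Suc[OF assms], of transpose] G_inv_symmetric[OF assms]
  by (simp add: matrix_transpose_mul matrix_mul_assoc transpose_uminus)

lemma R_A_R_diag:
  assumes "Suc j < l"
  shows "transpose (R (Suc j)) ** (A ** R (Suc j))
    = M (Suc j) + G (Suc j) ** (matrix_inv (G j) ** (M j ** (matrix_inv (G j) ** G (Suc j))))"
  using assms A_R_Suc_eq[of j] G_invertible[of "Suc j"]
  by (simp add: matrix_expand_simps R_orthogonal_mult R_R_mult matrix_mul_inv_cancel)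

lemma bcgErr_eq: "bcgErr A B X0 k = transpose (R k) ** (matrix_inv A ** R k)"
proof -
  have "matrix_inv A ** B - bcgX A B X0 k = matrix_inv A ** R k"
    by (simp add: bcgR_eq_residual matrix_diff_ldistrib matrix_inv_mul_cancel A_invertible)
  then show ?thesis
    unfolding bcgErr_def
    by (simp add: matrix_transpose_mul matrix_mul_assoc[symmetric] matrix_mul_inv_cancel A_invertible
        spd_matrix_inv_symmetric[OF spd_A])
qed

lemma bcgErr_Suc:
  assumes "k < l"
  shows "bcgErr A B X0 k = bcgTheta A B X0 k + bcgErr A B X0 (Suc k)"
proof -
  define U where "U = matrix_inv (M k) ** G k"
  have R_Suc_U: "R (Suc k) = R k - A ** (P k ** U)"
    by (simp add: R_Suc U_def)
  have R_P: "transpose (R k) ** (P k ** X) = G k ** X" for X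
    using R_P_eq_G assms by (simp add: matrix_mul_assoc)
  have P_R: "transpose (P k) ** (R k ** X) = G k ** X" for X
    using P_R_eq_G assms by (simp add: matrix_mul_assoc)
  have P_A_P: "transpose (P k) ** (A ** (P k ** X)) = M k ** X" for X
    by (simp add: M_def matrix_mul_assoc)
  have U_transpose: "transpose U = G k ** matrix_inv (M k)"
    using M_inv_symmetric[OF assms] by (simp add: U_def matrix_transpose_mul)
  have "bcgErr A B X0 (Suc k)
      = bcgErr A B X0 k - G k ** U - transpose U ** G k + transpose U ** (M k ** U)"
    unfolding bcgErr_eq R_Suc_U
    using assms
    by (simp add: matrix_expand_simps matrix_inv_mul_cancel matrix_mul_inv_cancel A_invertible
        R_P P_R P_A_P P_R_eq_G spd_matrix_inv_symmetric[OF spd_A])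
  also have "\<dots> = bcgErr A B X0 k - G k ** U"
    by (simp add: U_transpose U_def matrix_mul_assoc[symmetric] matrix_mul_inv_cancel M_invertible assms)
  finally show ?thesis
    by (simp add: bcgTheta_eq U_def)
qed

end

section \<open>The shifted quantities\<close>

text \<open>Block conjugation of the residuals in the inner product of \<open>C = A - \<mu> I\<close>: \<open>Z\<^sub>j\<^sub>+\<^sub>1\<close> is
  \<open>R\<^sub>j\<^sub>+\<^sub>1\<close> made \<open>C\<close>-conjugate to \<open>Z\<^sub>j\<close> alone.\<close>
fun zseq :: "real^'n^'n \<Rightarrow> real^'m^'n \<Rightarrow> real^'m^'n \<Rightarrow> real \<Rightarrow> nat \<Rightarrow> real^'m^'n" where
  "zseq A B X0 mu 0 = bcgR A B X0 0"
| "zseq A B X0 mu (Suc j) = bcgR A B X0 (Suc j) - zseq A B X0 mu j **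
     (matrix_inv (transpose (zseq A B X0 mu j) ** (A - mu *\<^sub>R mat 1) ** zseq A B X0 mu j)
       ** (transpose (zseq A B X0 mu j) ** ((A - mu *\<^sub>R mat 1) ** bcgR A B X0 (Suc j))))"

declare zseq.simps(2) [simp del]

locale bcg_shift = bcg_full_rank A B X0 l
  for A :: "real^'n^'n" and B X0 :: "real^'m^'n" and l :: nat +
  fixes mu :: real
  assumes mu_pos: "0 < mu" and shifted_spd: "spd (A - mu *\<^sub>R mat 1)"
begin

definition C where "C = A - mu *\<^sub>R mat 1"

abbreviation Z where "Z j \<equiv> zseq A B X0 mu j"

definition N where "N j = transpose (Z j) ** C ** Z j"

lemma C_spd: "spd C"
  using shifted_spd C_def by simp

lemma C_symmetric [simp]: "transpose C = C"
  using C_spd spd_symmetric by blast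

lemma Z_Suc: "Z (Suc j) = R (Suc j) - Z j ** (matrix_inv (N j) ** (transpose (Z j) ** (C ** R (Suc j))))"
  unfolding N_def C_def by (simp only: zseq.simps)

lemma R_C_mult: "transpose (R a) ** (C ** X) = transpose (R a) ** (A ** X) - mu *\<^sub>R (transpose (R a) ** X)"
  by (simp add: C_def matrix_expand_simps)

definition Z_relations where
  "Z_relations j \<longleftrightarrow> (\<forall>i. j < i \<and> i \<le> l \<longrightarrow> transpose (R i) ** Z j = 0)
    \<and> transpose (R j) ** Z j = G j
    \<and> (\<forall>i. j + 2 \<le> i \<and> i \<le> l \<longrightarrow> transpose (Z j) ** (C ** R i) = 0)
    \<and> (Suc j \<le> l \<longrightarrow> transpose (Z j) ** (C ** R (Suc j)) = transpose (R j) ** (C ** R (Suc j)))"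

lemma N_spd_if_Z_relations:
  assumes "j < l" "Z_relations j"
  shows "spd (N j)"
proof -
  have "x = 0" if "Z j *v x = 0" for x
  proof -
    have "G j *v x = transpose (R j) *v (Z j *v x)"
      using assms(2) unfolding Z_relations_def by (simp add: matrix_vector_mul_assoc)
    then have "G j *v x = 0"
      using that by simp
    then show "x = 0"
      using spd_kernel G_spd assms(1) by blast
  qed
  then show ?thesis
    unfolding N_def using spd_congruence[OF C_spd] by blast
qed

lemma Z_relations_0: "0 < l \<Longrightarrow> Z_relations 0"
  unfolding Z_relations_def using R_orthogonal
  by (auto simp: G_def matrix_transpose_mul matrix_mul_assoc[symmetric] R_C_mult matrix_expand_simps
      R_A_R_far' R_orthogonal_mult)

lemma Z_relations_Suc:
  assumes "Suc j < l" "Z_relations j"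
  shows "Z_relations (Suc j)"
proof -
  define K where "K = matrix_inv (N j) ** (transpose (Z j) ** (C ** R (Suc j)))"
  have Z_Suc_K: "Z (Suc j) = R (Suc j) - Z j ** K"
    by (simp add: Z_Suc K_def)
  have R_Z: "transpose (R i) ** (Z j ** X) = 0" if "j < i" "i \<le> l" for i X
    using assms(2) that unfolding Z_relations_def by (simp add: matrix_mul_assoc)
  have Z_C_R: "transpose (Z j) ** (C ** R i) = 0" if "j + 2 \<le> i" "i \<le> l" for i
    using assms(2) that Z_relations_def by blast
  have "\<forall>i. Suc j < i \<and> i \<le> l \<longrightarrow> transpose (R i) ** Z (Suc j) = 0"
    using assms by (auto simp: Z_Suc_K matrix_diff_ldistrib R_orthogonal R_Z)
  moreover have "transpose (R (Suc j)) ** Z (Suc j) = G (Suc j)"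
    using assms by (simp add: Z_Suc_K matrix_diff_ldistrib R_Z G_def)
  moreover have "\<forall>i. Suc j + 2 \<le> i \<and> i \<le> l \<longrightarrow> transpose (Z (Suc j)) ** (C ** R i) = 0"
    using assms
    by (auto simp: Z_Suc_K transpose_diff matrix_transpose_mul matrix_diff_rdistrib
        matrix_mul_assoc[symmetric] Z_C_R R_C_mult R_A_R_far' R_orthogonal_mult R_orthogonal)
  moreover have "Suc (Suc j) \<le> l \<longrightarrow> transpose (Z (Suc j)) ** (C ** R (Suc (Suc j)))
      = transpose (R (Suc j)) ** (C ** R (Suc (Suc j)))"
    using assms
    by (auto simp: Z_Suc_K transpose_diff matrix_transpose_mul matrix_diff_rdistrib
        matrix_mul_assoc[symmetric] Z_C_R)
  ultimately show ?thesis
    unfolding Z_relations_def by simp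
qed

lemma Z_relations_all: "j < l \<Longrightarrow> Z_relations j"
  by (induction j) (auto simp: Z_relations_0 Z_relations_Suc)

lemma N_spd: "j < l \<Longrightarrow> spd (N j)"
  using N_spd_if_Z_relations Z_relations_all by blast

lemma N_Suc:
  assumes "Suc j < l"
  shows "N (Suc j) = M (Suc j) + G (Suc j) ** (matrix_inv (G j) ** (M j ** (matrix_inv (G j) ** G (Suc j))))
     - mu *\<^sub>R G (Suc j)
     - G (Suc j) ** (matrix_inv (G j) ** (M j ** (matrix_inv (N j) ** (M j ** (matrix_inv (G j) ** G (Suc j))))))"
proof -
  have j: "j < l"
    using assms by simp
  define b where "b = transpose (Z j) ** (C ** R (Suc j))"
  define K where "K = matrix_inv (N j) ** b"
  have iN: "invertible (N j)"
    using spd_invertible N_spd j by blast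
  have Z_Suc_K: "Z (Suc j) = R (Suc j) - Z j ** K"
    by (simp only: Z_Suc K_def b_def)
  have b_transpose: "transpose (R (Suc j)) ** (C ** (Z j ** X)) = transpose b ** X" for X :: "real^'m^'m"
    by (simp add: b_def matrix_transpose_mul matrix_mul_assoc)
  have Z_C_Z: "transpose (Z j) ** (C ** (Z j ** X)) = N j ** X" for X :: "real^'m^'m"
    by (simp add: N_def matrix_mul_assoc)
  have "N (Suc j) = transpose (R (Suc j)) ** (C ** R (Suc j)) - transpose b ** K - transpose K ** b
      + transpose K ** (N j ** K)"
    unfolding N_def Z_Suc_K by (simp add: matrix_expand_simps Z_C_Z b_transpose b_def[symmetric])
  also have "\<dots> = transpose (R (Suc j)) ** (C ** R (Suc j)) - transpose b ** (matrix_inv (N j) ** b)"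
    using spd_matrix_inv_symmetric[OF N_spd[OF j]]
    by (simp add: K_def matrix_transpose_mul matrix_mul_inv_cancel iN matrix_mul_assoc[symmetric])
  finally have N_Suc_b: "N (Suc j) = transpose (R (Suc j)) ** (C ** R (Suc j))
      - transpose b ** (matrix_inv (N j) ** b)" .
  have b: "b = - (M j ** (matrix_inv (G j) ** G (Suc j)))"
    using Z_relations_all[OF j] assms unfolding b_def Z_relations_def
    by (simp add: R_C_mult R_A_R_Suc' R_orthogonal)
  then have "transpose b = - (G (Suc j) ** (matrix_inv (G j) ** M j))"
    using G_inv_symmetric[OF j] by (simp add: transpose_uminus matrix_transpose_mul matrix_mul_assoc)
  then show ?thesis
    unfolding N_Suc_b using assms G_inv_symmetric[OF j]
    by (simp add: b R_C_mult R_A_R_diag matrix_expand_simps G_def[of "Suc j", symmetric] R_R_mult)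
qed

end

context bcg_shift
begin

abbreviation TM where "TM j \<equiv> ThetaMu mu A B X0 j"

definition D where "D j = TM j - bcgTheta A B X0 j"

definition Y where "Y j = M j - N j"

definition ThetaMu_repr where
  "ThetaMu_repr j \<longleftrightarrow> spd (Y j) \<and> TM j = G j ** (matrix_inv (Y j) ** G j)"

lemma TM_Suc: "TM (Suc j) = G (Suc j) ** (matrix_inv (mu *\<^sub>R D j + G (Suc j)) ** D j)"
  by (simp add: ThetaMu_def D_def G_def Let_def)

lemma ThetaMu_repr_0:
  assumes "0 < l"
  shows "ThetaMu_repr 0"
proof -
  have "Y 0 = mu *\<^sub>R G 0"
    by (simp add: Y_def M_def N_def bcg_0 C_def G_def matrix_expand_simps scaleR_diff_right)
  moreover have "spd (mu *\<^sub>R G 0)"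
    using G_spd assms mu_pos spd_scaleR by blast
  moreover have "TM 0 = G 0 ** (matrix_inv (mu *\<^sub>R G 0) ** G 0)"
    using mu_pos G_invertible[OF assms]
    by (simp add: ThetaMu_def G_def[symmetric] matrix_inv_scaleR matrix_mul_scaleR_left
        matrix_mul_scaleR_right matrix_inv_left)
  ultimately show ?thesis
    unfolding ThetaMu_repr_def by simp
qed

lemma D_spd_if_repr:
  assumes "j < l" "ThetaMu_repr j"
  shows "spd (D j)"
    and "matrix_inv (D j) = matrix_inv (G j) ** ((Y j + Y j ** matrix_inv (N j) ** Y j) ** matrix_inv (G j))"
proof -
  have Y: "spd (Y j)"
    using assms(2) ThetaMu_repr_def by simp
  have N: "spd (N j)"
    using N_spd assms(1) by blast
  define W where "W = Y j + Y j ** matrix_inv (N j) ** Y j"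
  have W: "spd W"
    unfolding W_def by (rule spd_add_congruence_inv[OF Y N])
  have "matrix_inv W = matrix_inv (Y j) - matrix_inv (M j)"
    unfolding W_def using matrix_inv_add_congruence_inv[OF Y N] by (simp add: Y_def)
  then have D_eq: "D j = G j ** (matrix_inv W ** G j)"
    using assms(2) unfolding D_def ThetaMu_repr_def by (simp add: bcgTheta_eq matrix_expand_simps)
  show "spd (D j)"
    using spd_congruence[OF spd_matrix_inv[OF W], of "G j"] spd_kernel[OF G_spd[OF assms(1)]]
    by (simp add: D_eq matrix_mul_assoc)
  have "D j ** (matrix_inv (G j) ** (W ** matrix_inv (G j))) = mat 1"
    using G_invertible[OF assms(1)] spd_invertible[OF W]
    by (simp add: D_eq matrix_mul_assoc[symmetric] matrix_mul_inv_cancel matrix_inv_mul_cancel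
        matrix_inv_right)
  then show "matrix_inv (D j) = matrix_inv (G j) ** ((Y j + Y j ** matrix_inv (N j) ** Y j) ** matrix_inv (G j))"
    unfolding W_def by (rule matrix_inv_unique)
qed

text \<open>\<open>simp\<close> normalises \<open>X + X\<close> to \<open>2 * X\<close>, where \<open>*\<close> is the componentwise product.\<close>
lemma numeral_times_matrix: "(numeral w :: real^'a^'b) * X = (numeral w :: real) *\<^sub>R X"
  by (simp add: vec_eq_iff)

lemma Y_Suc:
  assumes "Suc j < l" "ThetaMu_repr j"
  shows "Y (Suc j) = mu *\<^sub>R G (Suc j) + G (Suc j) ** (matrix_inv (D j) ** G (Suc j))"
proof -
  have "M j = Y j + N j"
    by (simp add: Y_def)
  moreover have "invertible (N j)"
    using assms(1) by (simp add: N_spd spd_invertible)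
  moreover have "j < l"
    using assms(1) by simp
  ultimately show ?thesis
    unfolding Y_def[of "Suc j"] N_Suc[OF assms(1)] D_spd_if_repr(2)[OF \<open>j < l\<close> assms(2)]
    using assms(1) by (simp add: matrix_expand_simps matrix_inv_mul_cancel matrix_inv_left
        matrix_mul_inv_cancel numeral_times_matrix)
qed

lemma ThetaMu_repr_Suc:
  assumes "Suc j < l" "ThetaMu_repr j"
  shows "ThetaMu_repr (Suc j)"
proof -
  define G' where "G' = G (Suc j)"
  define S where "S = mu *\<^sub>R D j + G'"
  have D: "spd (D j)"
    using D_spd_if_repr(1) assms by simp
  have G': "spd G'"
    using G_spd assms(1) G'_def by simp
  have S: "spd S"
    unfolding S_def by (rule spd_add[OF spd_scaleR[OF D mu_pos] G'])
  have iD: "invertible (D j)" and iG': "invertible G'" and iS: "invertible S"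
    using D G' S spd_invertible by blast+
  have Y_factor: "Y (Suc j) = G' ** (matrix_inv (D j) ** S)"
    unfolding Y_Suc[OF assms] S_def G'_def
    using iD by (simp add: matrix_expand_simps matrix_inv_left)
  have "psd (transpose G' ** matrix_inv (D j) ** G')"
    by (rule psd_congruence[OF spd_imp_psd[OF spd_matrix_inv[OF D]]])
  then have "spd (Y (Suc j))"
    unfolding Y_Suc[OF assms] G'_def[symmetric]
    using spd_add_psd[OF spd_scaleR[OF G' mu_pos]] by (simp add: G'_def matrix_mul_assoc)
  moreover have "matrix_inv (Y (Suc j)) = matrix_inv S ** (D j ** matrix_inv G')"
    by (rule matrix_inv_unique)
      (simp add: Y_factor matrix_mul_assoc[symmetric] iS iD iG' matrix_mul_inv_cancel
        matrix_inv_mul_cancel matrix_inv_right)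
  then have "G' ** (matrix_inv (Y (Suc j)) ** G') = TM (Suc j)"
    using iG' by (simp add: TM_Suc S_def G'_def matrix_mul_assoc[symmetric] matrix_inv_left)
  ultimately show ?thesis
    unfolding ThetaMu_repr_def G'_def by simp
qed

lemma ThetaMu_repr_all: "j < l \<Longrightarrow> ThetaMu_repr j"
  by (induction j) (auto simp: ThetaMu_repr_0 ThetaMu_repr_Suc)

lemma D_spd: "j < l \<Longrightarrow> spd (D j)"
  using D_spd_if_repr(1) ThetaMu_repr_all by blast

lemma UpsMu_denominator_spd:
  assumes "j < l"
  shows "spd (mu *\<^sub>R D j + G (Suc j))"
  by (rule spd_add_psd[OF spd_scaleR[OF D_spd[OF assms] mu_pos] G_psd])

lemma BMu_spd:
  assumes "1 \<le> k" "k \<le> l"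
  shows "spd (BMu mu A B X0 k)"
proof -
  obtain i where k: "k = Suc i"
    using assms by (cases k) auto
  then have i: "i < l"
    using assms by simp
  define S where "S = mu *\<^sub>R D i + G k"
  have S: "spd S"
    using UpsMu_denominator_spd[OF i] by (simp add: S_def k)
  have G_eq: "G k = S - mu *\<^sub>R D i"
    by (simp add: S_def)
  have "BMu mu A B X0 k = D i - G k ** (matrix_inv S ** D i)"
    by (simp add: BMu_def k TM_Suc D_def S_def)
  also have "\<dots> = mu *\<^sub>R (transpose (D i) ** matrix_inv S ** D i)"
    unfolding G_eq using spd_invertible[OF S] spd_symmetric[OF D_spd[OF i]]
    by (simp add: matrix_expand_simps matrix_mul_inv_cancel)
  finally have B_eq: "BMu mu A B X0 k = mu *\<^sub>R (transpose (D i) ** matrix_inv S ** D i)" .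
  have "spd (transpose (D i) ** matrix_inv S ** D i)"
    by (rule spd_congruence[OF spd_matrix_inv[OF S]]) (rule spd_kernel[OF D_spd[OF i]])
  then show ?thesis
    unfolding B_eq by (rule spd_scaleR[OF _ mu_pos])
qed

lemma ThetaMu_minus_bcgErr_step:
  assumes "1 \<le> k" "k \<le> l"
  shows "TM (k - 1) - bcgErr A B X0 (k - 1) = BMu mu A B X0 k + (TM k - bcgErr A B X0 k)"
proof -
  obtain i where k: "k = Suc i"
    using assms by (cases k) auto
  then show ?thesis
    using bcgErr_Suc[of i] assms by (simp add: BMu_def algebra_simps)
qed

lemma ThetaMu_minus_bcgErr_telescope:
  assumes "1 \<le> k" "k \<le> l"
  shows "TM (k - 1) - bcgErr A B X0 (k - 1)
    = (\<Sum>j = k..l. BMu mu A B X0 j) + (TM l - bcgErr A B X0 l)"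
  using assms(2,1)
proof (induction k rule: inc_induct)
  case base
  then show ?case
    using ThetaMu_minus_bcgErr_step[of l] by simp
next
  case (step n)
  then show ?case
    using ThetaMu_minus_bcgErr_step[of n] by (simp add: sum.atLeast_Suc_atMost add.assoc)
qed

lemma ThetaMu_minus_bcgErr_spd:
  assumes "R l = 0" "1 \<le> k" "k \<le> l"
  shows "spd (TM (k - 1) - bcgErr A B X0 (k - 1))"
  using assms(3,2)
proof (induction k rule: inc_induct)
  case base
  have "bcgErr A B X0 l = 0" "TM l = 0"
    by (simp_all add: bcgErr_eq ThetaMu_def assms(1))
  then show ?case
    using ThetaMu_minus_bcgErr_step[of l] BMu_spd[of l] base by simp
next
  case (step n)
  then show ?case
    using ThetaMu_minus_bcgErr_step[of n] BMu_spd[of n] spd_add by simp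
qed

end

theorem theorem7:
  fixes A :: "real^'n^'n" and B X0 :: "real^'m^'n" and mu :: real and l :: nat
  assumes "spd A"
    and "0 < mu" and "mu < lambda_min A"
    and "l \<ge> 1"
    and "\<forall>k < l. rank (bcgR A B X0 k) = CARD('m)"
  shows "(\<forall>k < l. invertible (transpose (bcgP A B X0 k) ** A ** bcgP A B X0 k))
       \<and> (\<forall>j \<in> {1..l}. invertible
             (mu *\<^sub>R (ThetaMu mu A B X0 (j - 1) - bcgTheta A B X0 (j - 1))
               + transpose (bcgR A B X0 j) ** bcgR A B X0 j))
       \<and> (\<forall>k \<in> {1..l}. ThetaMu mu A B X0 (k - 1) - bcgErr A B X0 (k - 1)
             = (\<Sum>j = k..l. BMu mu A B X0 j) + (ThetaMu mu A B X0 l - bcgErr A B X0 l))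
       \<and> (\<forall>j \<in> {1..l}. spd (BMu mu A B X0 j))
       \<and> (bcgR A B X0 l = 0 \<longrightarrow>
            (\<forall>k \<in> {1..l}. spd (ThetaMu mu A B X0 (k - 1) - bcgErr A B X0 (k - 1))))"
proof -
  have "x = 0" if "k < l" "bcgR A B X0 k *v x = 0" for k x
    using full_rank_injective assms(5) that by (metis injD matrix_vector_mult_0_right)
  moreover have "spd (A - mu *\<^sub>R mat 1)"
    using spd_shift_below_lambda_min spd_symmetric assms(1,3) by blast
  ultimately interpret bcg_shift A B X0 l mu
    using assms(1,2) by unfold_locales auto
  have "invertible (mu *\<^sub>R (ThetaMu mu A B X0 (j - 1) - bcgTheta A B X0 (j - 1))
      + transpose (bcgR A B X0 j) ** bcgR A B X0 j)" if "j \<in> {1..l}" for j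
  proof -
    have "j - 1 < l" "Suc (j - 1) = j"
      using that by auto
    then show ?thesis
      using spd_invertible[OF UpsMu_denominator_spd[of "j - 1"]] by (simp add: D_def G_def)
  qed
  then show ?thesis
    using M_invertible ThetaMu_minus_bcgErr_telescope BMu_spd ThetaMu_minus_bcgErr_spd by (auto simp: M_def)
qed

end
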